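(* Under the standing assumptions (A1)–(A2) below, there exists $\varepsilon^*>0$ such that if $0<\varepsilon<\varepsilon^*$ and $(\bm{\alpha}_m)_{m\ge1}\subset\mathcal{A}^{(t_0,t_f)}$ is a sequence with $I_\varepsilon^{(t_0,t_f)}[\bm{\alpha}_m]<M_1$ for all $m$ and some $M_1>0$, then there exists $M_2>0$ such that $\|\bm{\alpha}_m\|_{H^1}<M_2$ for all $m$.
   Context: Write points of $\mathbb{R}^n$ as $\mathbf{x}=(x,\mathbf{y})$ with $x\in\mathbb{R}$, $\mathbf{y}\in\mathbb{R}^{n-1}$; $|\cdot|$ is the Euclidean norm and $\langle\cdot,\cdot\rangle$ the Euclidean inner product. Let $\mathbf{F}^{\pm}:\mathbb{R}^n\to\mathbb{R}^n$ be smooth vector fields and define the piecewise-smooth field $\mathbf{F}(\mathbf{x})=\mathbf{F}^+(\mathbf{x})$ if $x>0$, $\mathbf{F}(\mathbf{x})=\mathbf{F}^-(\mathbf{x})$ if $x<0$. Standing assumptions: (A1) (growth) There exist $1<p<\infty$, $R_1,c_1,c_3,c_5>0$ and $c_2,c_4,c_6\in\mathbb{R}$ with $c_5<c_1$ such that for $|\mathbf{x}|>R_1$: $|\mathbf{F}^-(\mathbf{x})|\ge c_1|\mathbf{x}|^p+c_2$ if $x<0$ and $|\mathbf{F}^+(\mathbf{x})|\ge c_1|\mathbf{x}|^p+c_2$ if $x>0$; $|\partial_x\mathbf{F}^-(\mathbf{x})|\le c_3|\mathbf{x}|^p+c_4$ if $x<0$ and $|\partial_x\mathbf{F}^+(\mathbf{x})|\le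 c_3|\mathbf{x}|^p+c_4$ if $x>0$; and $|\mathbf{F}^+(0,\mathbf{y})-\mathbf{F}^-(0,\mathbf{y})|\le c_5|\mathbf{y}|^p+c_6$. (A2) (asymptotically inward-flowing) There exist $R_2,c_7>0$ such that $|\mathbf{x}|>R_2$ implies $\mathbf{F}^{\pm}(\mathbf{x})\neq0$ and $\langle\mathbf{F}^-(\mathbf{x}),\mathbf{x}/|\mathbf{x}|\rangle<-c_7|\mathbf{F}^-(\mathbf{x})|$ if $x\le0$, $\langle\mathbf{F}^+(\mathbf{x}),\mathbf{x}/|\mathbf{x}|\rangle<-c_7|\mathbf{F}^+(\mathbf{x})|$ if $x\ge0$. Mollification: let $\zeta:\mathbb{R}\to\mathbb{R}$ be a smooth, even, nonnegative function supported in $[-1,1]$ with $\int_{\mathbb{R}}\zeta=1$. For $\varepsilon>0$ set $\zeta_\varepsilon(x)=\zeta(x/\varepsilon)/\varepsilon$, and define \[ \mathbf{F}^{\varepsilon}(x,\mathbf{y})=\int_{-\varepsilon}^{\varepsilon}\zeta_\varepsilon(u)\Big(\mathbf{F}^-(x-u,\mathbf{y})\mathbb{1}_{\{u\ge x\}}+\mathbf{F}^+(x-u,\mathbf{y})\mathbb{1}_{\{u\le x\}}\Big)\,du . \] Fix $-\infty<t_0<t_f<\infty$ and $\mathbf{x}_0,\mathbf{x}_f\in\mathbb{R}^n$. The admissible set is $\mathcal{A}^{(t_0,t_f)}=\{\bm{\alpha}\in H^1([t_0,t_f];\mathbb{R}^n):\bm{\alpha}(t_0)=\mathbf{x}_0,\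 \bm{\alpha}(t_f)=\mathbf{x}_f\}$, and the mollified Freidlin–Wentzell rate functional is $I_\varepsilon^{(t_0,t_f)}[\bm{\alpha}]=\int_{t_0}^{t_f}|\dot{\bm{\alpha}}(t)-\mathbf{F}^{\varepsilon}(\bm{\alpha}(t))|^2\,dt$. Here $\|\bm{\alpha}\|_{H^1}^2=\int_{t_0}^{t_f}(|\bm{\alpha}|^2+|\dot{\bm{\alpha}}|^2)\,dt$. *)

theory Defs
  imports "HOL-Analysis.Analysis"
begin

fun Ck :: "nat \<Rightarrow> ('a::real_normed_vector \<Rightarrow> 'b::real_normed_vector) \<Rightarrow> bool" where
  "Ck 0 f = continuous_on UNIV f"
| "Ck (Suc k) f = ((\<forall>x. f differentiable (at x)) \<and>
                   (\<forall>v. Ck k (\<lambda>x. frechet_derivative f (at x) v)))"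

definition smooth :: "('a::real_normed_vector \<Rightarrow> 'b::real_normed_vector) \<Rightarrow> bool" where
  "smooth f \<longleftrightarrow> (\<forall>k. Ck k f)"

(* Points of R^n are v, with x-coordinate v \<bullet> e (e a fixed standard basis vector)
   and y-part v - (v \<bullet> e) *\<^sub>R e.  Shifting x by -u is v - u *\<^sub>R e. *)

definition assumption_A1 ::
  "'a::euclidean_space \<Rightarrow> ('a \<Rightarrow> 'a) \<Rightarrow> ('a \<Rightarrow> 'a) \<Rightarrow> bool" where
  "assumption_A1 e Fm Fp \<longleftrightarrow>
    (\<exists>p R1 c1 c2 c3 c4 c5 c6. 1 < p \<and> R1 > 0 \<and> c1 > 0 \<and> c3 > 0 \<and> c5 > 0 \<and> c5 < c1 \<and>
      (\<forall>v. norm v > R1 \<longrightarrow>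
         (v \<bullet> e < 0 \<longrightarrow> norm (Fm v) \<ge> c1 * norm v powr p + c2) \<and>
         (v \<bullet> e > 0 \<longrightarrow> norm (Fp v) \<ge> c1 * norm v powr p + c2) \<and>
         (v \<bullet> e < 0 \<longrightarrow> norm (frechet_derivative Fm (at v) e) \<le> c3 * norm v powr p + c4) \<and>
         (v \<bullet> e > 0 \<longrightarrow> norm (frechet_derivative Fp (at v) e) \<le> c3 * norm v powr p + c4) \<and>
         (v \<bullet> e = 0 \<longrightarrow> norm (Fp v - Fm v) \<le> c5 * norm (v - (v \<bullet> e) *\<^sub>R e) powr p + c6)))"

definition assumption_A2 ::
  "'a::euclidean_space \<Rightarrow> ('a \<Rightarrow> 'a) \<Rightarrow> ('a \<Rightarrow> 'a) \<Rightarrow> bool" where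
  "assumption_A2 e Fm Fp \<longleftrightarrow>
    (\<exists>R2 c7. R2 > 0 \<and> c7 > 0 \<and>
      (\<forall>v. norm v > R2 \<longrightarrow>
         Fm v \<noteq> 0 \<and> Fp v \<noteq> 0 \<and>
         (v \<bullet> e \<le> 0 \<longrightarrow> Fm v \<bullet> (v /\<^sub>R norm v) < - c7 * norm (Fm v)) \<and>
         (v \<bullet> e \<ge> 0 \<longrightarrow> Fp v \<bullet> (v /\<^sub>R norm v) < - c7 * norm (Fp v))))"

definition mollifier :: "(real \<Rightarrow> real) \<Rightarrow> bool" where
  "mollifier \<zeta> \<longleftrightarrow> smooth \<zeta> \<and> (\<forall>x. \<zeta> (- x) = \<zeta> x) \<and> (\<forall>x. \<zeta> x \<ge> 0) \<and>
     (\<forall>x. \<zeta> x \<noteq> 0 \<longrightarrow> x \<in> {-1..1}) \<and> (\<zeta> has_integral 1) UNIV"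

definition Feps ::
  "(real \<Rightarrow> real) \<Rightarrow> 'a::euclidean_space \<Rightarrow> ('a \<Rightarrow> 'a) \<Rightarrow> ('a \<Rightarrow> 'a) \<Rightarrow> real \<Rightarrow> 'a \<Rightarrow> 'a" where
  "Feps \<zeta> e Fm Fp \<epsilon> v =
     integral {-\<epsilon>..\<epsilon>} (\<lambda>u. (\<zeta> (u / \<epsilon>) / \<epsilon>) *\<^sub>R
        ((if u \<ge> v \<bullet> e then Fm (v - u *\<^sub>R e) else 0) +
         (if u \<le> v \<bullet> e then Fp (v - u *\<^sub>R e) else 0)))"

(* alpha is in the admissible set A^(t0,tf), with weak derivative alpha' in L^2 *)
definition admissible ::
  "real \<Rightarrow> real \<Rightarrow> 'a::euclidean_space \<Rightarrow> 'a \<Rightarrow> (real \<Rightarrow> 'a) \<Rightarrow> (real \<Rightarrow> 'a) \<Rightarrow> bool" where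
  "admissible t0 tf x0 xf \<alpha> \<alpha>' \<longleftrightarrow>
     set_borel_measurable lborel {t0..tf} \<alpha>' \<and>
     (\<integral>\<^sup>+ t\<in>{t0..tf}. ennreal ((norm (\<alpha>' t))\<^sup>2) \<partial>lborel) < \<infinity> \<and>
     (\<forall>t\<in>{t0..tf}. \<alpha> t = x0 + (LINT s:{t0..t}|lborel. \<alpha>' s)) \<and>
     \<alpha> tf = xf"

definition rate ::
  "(real \<Rightarrow> real) \<Rightarrow> 'a::euclidean_space \<Rightarrow> ('a \<Rightarrow> 'a) \<Rightarrow> ('a \<Rightarrow> 'a) \<Rightarrow> real \<Rightarrow>
   real \<Rightarrow> real \<Rightarrow> (real \<Rightarrow> 'a) \<Rightarrow> (real \<Rightarrow> 'a) \<Rightarrow> ennreal" where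
  "rate \<zeta> e Fm Fp \<epsilon> t0 tf \<alpha> \<alpha>' =
     (\<integral>\<^sup>+ t\<in>{t0..tf}. ennreal ((norm (\<alpha>' t - Feps \<zeta> e Fm Fp \<epsilon> (\<alpha> t)))\<^sup>2) \<partial>lborel)"

definition H1_norm_sq :: "real \<Rightarrow> real \<Rightarrow> (real \<Rightarrow> 'a::euclidean_space) \<Rightarrow> (real \<Rightarrow> 'a) \<Rightarrow> ennreal" where
  "H1_norm_sq t0 tf \<alpha> \<alpha>' =
     (\<integral>\<^sup>+ t\<in>{t0..tf}. ennreal ((norm (\<alpha> t))\<^sup>2 + (norm (\<alpha>' t))\<^sup>2) \<partial>lborel)"

end

theory Submission
  imports Defs
begin

text \<open>
  Once a path reaches a large radius at some time \<open>T\<close>, look back to the last time \<open>s\<close> at which its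
  component along the unit direction \<open>w\<close> of \<open>\<alpha> T\<close> was below \<open>(1 - \<delta>) |\<alpha> T|\<close>. On \<open>(s, T]\<close> the
  path stays in a narrow cone around \<open>w\<close>, where (A2) makes the mollified field point against \<open>w\<close>;
  hence the outward progress \<open>\<delta> |\<alpha> T|\<close> is paid for by \<open>\<integral> |\<alpha>' - F\<^sup>\<epsilon>(\<alpha>)| \<le> I\<^sub>\<epsilon>[\<alpha>] + (t\<^sub>f - t\<^sub>0)\<close>.
  This bounds all paths of bounded rate uniformly, after which \<open>|\<alpha>'| \<le> |\<alpha>' - F\<^sup>\<epsilon>(\<alpha>)| + sup |F\<^sup>\<epsilon>|\<close>
  on the bounded region gives the \<open>H\<^sup>1\<close> bound.
\<close>

lemma le_power2_plus_1: "(x::real) \<le> x\<^sup>2 + 1"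
proof -
  have "0 \<le> (x - 1)\<^sup>2" by simp
  then show ?thesis by (simp add: power2_diff) (smt (verit) zero_le_power2)
qed

text \<open>
  No measurability is required of \<open>g\<close>: it will be \<open>|\<alpha>' - F\<^sup>\<epsilon>(\<alpha>)|\<^sup>2\<close>, and \<open>F\<^sup>\<epsilon>\<close> is not known to
  be measurable. The proof compares \<open>f\<close> with the measurable truncation \<open>max 0 ((f - C) / a)\<close> instead.
\<close>

lemma nn_set_integral_le_affine:
  fixes f g :: "'b \<Rightarrow> real"
  assumes f: "set_borel_measurable M I f" and I: "I \<in> sets M"
    and le: "\<And>t. t \<in> I \<Longrightarrow> f t \<le> a * g t + C" and a: "a > 0" and C: "C \<ge> 0"
  shows "(\<integral>\<^sup>+t\<in>I. ennreal (f t) \<partial>M)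
           \<le> ennreal a * (\<integral>\<^sup>+t\<in>I. ennreal (g t) \<partial>M) + ennreal C * emeasure M I"
proof -
  define q where "q t = max 0 ((indicator I t *\<^sub>R f t - C) / a)" for t
  have "(\<lambda>t. indicator I t *\<^sub>R f t) \<in> borel_measurable M"
    using f by (simp add: set_borel_measurable_def)
  then have "q \<in> borel_measurable M"
    unfolding q_def
    by (intro borel_measurable_max borel_measurable_const borel_measurable_divide borel_measurable_diff)
  then have q_meas[measurable]: "(\<lambda>t. ennreal (q t)) \<in> borel_measurable M"
    by simp
  have "(\<integral>\<^sup>+t\<in>I. ennreal (f t) \<partial>M) \<le> (\<integral>\<^sup>+t. ennreal a * ennreal (q t) + ennreal C * indicator I t \<partial>M)"
  proof (intro nn_integral_mono)
    fix t
    show "ennreal (f t) * indicator I t \<le> ennreal a * ennreal (q t) + ennreal C * indicator I t"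
    proof (cases "t \<in> I")
      case True
      have "f t - C = a * ((f t - C) / a)" using a by simp
      also have "\<dots> \<le> a * q t" using True a by (intro mult_left_mono) (auto simp: q_def)
      finally have "f t \<le> a * q t + C" by simp
      then have "ennreal (f t) \<le> ennreal (a * q t + C)" by (rule ennreal_leI)
      also have "\<dots> = ennreal a * ennreal (q t) + ennreal C"
        using a C by (simp add: q_def ennreal_plus ennreal_mult)
      finally show ?thesis using True by simp
    qed simp
  qed
  also have "\<dots> = ennreal a * (\<integral>\<^sup>+t. ennreal (q t) \<partial>M) + ennreal C * emeasure M I"
    using I by (simp add: nn_integral_add nn_integral_cmult nn_integral_cmult_indicator)
  also have "(\<integral>\<^sup>+t. ennreal (q t) \<partial>M) \<le> (\<integral>\<^sup>+t\<in>I. ennreal (g t) \<partial>M)"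
  proof (intro nn_integral_mono)
    fix t
    show "ennreal (q t) \<le> ennreal (g t) * indicator I t"
    proof (cases "t \<in> I")
      case True
      have "(f t - C) / a \<le> g t" using le[OF True] a by (simp add: divide_le_eq mult.commute)
      then have "q t \<le> max 0 (g t)" using True by (simp add: q_def)
      then have "ennreal (q t) \<le> ennreal (max 0 (g t))" by (rule ennreal_leI)
      then show ?thesis using True by (simp add: ennreal_max_0)
    qed (use a C in \<open>simp add: q_def\<close>)
  qed
  finally show ?thesis
    by (simp add: add_right_mono mult_left_mono)
qed

lemma first_time_ge:
  fixes f :: "real \<Rightarrow> real"
  assumes f: "continuous_on {a..b} f" and t1: "t1 \<in> {a..b}" "c \<le> f t1"
  obtains T where "T \<in> {a..t1}" "c \<le> f T" "\<And>r. r \<in> {a..<T} \<Longrightarrow> f r < c"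
proof -
  define S where "S = {a..t1} \<inter> f -` {c..}"
  have "closed S"
    unfolding S_def using t1
    by (intro continuous_closed_preimage continuous_on_subset[OF f]) auto
  moreover have "t1 \<in> S" "bdd_below S"
    using t1 by (auto simp: S_def)
  ultimately have "Inf S \<in> S"
    by (intro closed_contains_Inf) auto
  moreover have "f r < c" if "r \<in> {a..<Inf S}" for r
  proof (rule ccontr)
    assume "\<not> f r < c"
    then have "r \<in> S" using that \<open>Inf S \<in> S\<close> by (auto simp: S_def)
    then show False using that cInf_lower[OF _ \<open>bdd_below S\<close>] by fastforce
  qed
  ultimately show ?thesis
    using that by (auto simp: S_def)
qed

lemma last_time_le:
  fixes g :: "real \<Rightarrow> real"
  assumes g: "continuous_on {a..b} g" and "a \<le> b" "g a \<le> c"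
  obtains s where "s \<in> {a..b}" "g s \<le> c" "\<And>r. r \<in> {s<..b} \<Longrightarrow> c < g r"
proof -
  define P where "P = {a..b} \<inter> g -` {..c}"
  have "closed P"
    unfolding P_def by (intro continuous_closed_preimage g) auto
  moreover have "a \<in> P" "bdd_above P"
    using assms by (auto simp: P_def)
  ultimately have "Sup P \<in> P"
    by (intro closed_contains_Sup) auto
  moreover have "c < g r" if "r \<in> {Sup P<..b}" for r
  proof (rule ccontr)
    assume "\<not> c < g r"
    then have "r \<in> P" using that \<open>Sup P \<in> P\<close> by (auto simp: P_def)
    then show False using that cSup_upper[OF _ \<open>bdd_above P\<close>] by fastforce
  qed
  ultimately show ?thesis
    using that by (auto simp: P_def)
qed

lemma admissible_set_integrable:
  fixes \<alpha> \<alpha>' :: "real \<Rightarrow> 'a::euclidean_space"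
  assumes adm: "admissible t0 tf x0 xf \<alpha> \<alpha>'"
  shows "set_integrable lborel {t0..tf} \<alpha>'"
proof -
  have meas: "(\<lambda>t. indicator {t0..tf} t *\<^sub>R \<alpha>' t) \<in> borel_measurable lborel"
    and L2: "(\<integral>\<^sup>+t\<in>{t0..tf}. ennreal ((norm (\<alpha>' t))\<^sup>2) \<partial>lborel) < \<infinity>"
    using adm by (auto simp: admissible_def set_borel_measurable_def)
  have norm_meas: "set_borel_measurable lborel {t0..tf} (\<lambda>t. norm (\<alpha>' t))"
    using measurable_compose[OF meas borel_measurable_norm] by (simp add: set_borel_measurable_def)
  have "(\<integral>\<^sup>+t. ennreal (norm (indicator {t0..tf} t *\<^sub>R \<alpha>' t)) \<partial>lborel)
      = (\<integral>\<^sup>+t\<in>{t0..tf}. ennreal (norm (\<alpha>' t)) \<partial>lborel)"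
    by (intro nn_integral_cong) (simp split: split_indicator)
  also have "\<dots> \<le> ennreal 1 * (\<integral>\<^sup>+t\<in>{t0..tf}. ennreal ((norm (\<alpha>' t))\<^sup>2) \<partial>lborel)
      + ennreal 1 * emeasure lborel {t0..tf}"
    by (rule nn_set_integral_le_affine[OF norm_meas]) (simp_all add: le_power2_plus_1)
  also have "\<dots> < \<infinity>"
    using L2 by (simp add: emeasure_lborel_Icc_eq)
  finally have "(\<integral>\<^sup>+t. ennreal (norm (indicator {t0..tf} t *\<^sub>R \<alpha>' t)) \<partial>lborel) < \<infinity>" .
  then show ?thesis
    unfolding set_integrable_def by (rule integrableI_bounded[OF meas])
qed

lemma admissible_eq_integral:
  fixes \<alpha> \<alpha>' :: "real \<Rightarrow> 'a::euclidean_space"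
  assumes adm: "admissible t0 tf x0 xf \<alpha> \<alpha>'" and t: "t \<in> {t0..tf}"
  shows "\<alpha> t = x0 + integral {t0..t} \<alpha>'"
proof -
  have "set_integrable lborel {t0..t} \<alpha>'"
    by (rule set_integrable_subset[OF admissible_set_integrable[OF adm]]) (use t in auto)
  then have "(LINT s:{t0..t}|lborel. \<alpha>' s) = integral {t0..t} \<alpha>'"
    by (rule set_borel_integral_eq_integral(2))
  then show ?thesis using adm t by (simp add: admissible_def)
qed

lemma admissible_start:
  fixes \<alpha> \<alpha>' :: "real \<Rightarrow> 'a::euclidean_space"
  assumes "admissible t0 tf x0 xf \<alpha> \<alpha>'" "t0 \<le> tf"
  shows "\<alpha> t0 = x0"
  using admissible_eq_integral[OF assms(1), of t0] assms(2) by simp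

lemma admissible_continuous_on:
  fixes \<alpha> \<alpha>' :: "real \<Rightarrow> 'a::euclidean_space"
  assumes adm: "admissible t0 tf x0 xf \<alpha> \<alpha>'"
  shows "continuous_on {t0..tf} \<alpha>"
proof -
  have "continuous_on {t0..tf} (\<lambda>t. x0 + integral {t0..t} \<alpha>')"
    using set_borel_integral_eq_integral(1)[OF admissible_set_integrable[OF adm]]
    by (intro continuous_on_add continuous_on_const indefinite_integral_continuous_1)
  then show ?thesis
    by (rule continuous_on_eq) (use admissible_eq_integral[OF adm] in auto)
qed

lemma admissible_increment:
  fixes \<alpha> \<alpha>' :: "real \<Rightarrow> 'a::euclidean_space"
  assumes adm: "admissible t0 tf x0 xf \<alpha> \<alpha>'" and "t0 \<le> s" "s \<le> t" "t \<le> tf"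
  shows "\<alpha> t - \<alpha> s = (LINT r:{s<..t}|lborel. \<alpha>' r)"
proof -
  have int: "set_integrable lborel {t0..tf} \<alpha>'"
    by (rule admissible_set_integrable[OF adm])
  have "(LINT r:{t0..t}|lborel. \<alpha>' r) = (LINT r:{t0..s}|lborel. \<alpha>' r) + (LINT r:{s<..t}|lborel. \<alpha>' r)"
  proof -
    have "{t0..t} = {t0..s} \<union> {s<..t}" using assms by auto
    moreover have "set_integrable lborel {t0..s} \<alpha>'" "set_integrable lborel {s<..t} \<alpha>'"
      using assms by (auto intro: set_integrable_subset[OF int])
    ultimately show ?thesis by (simp add: set_integral_Un ivl_disj_int)
  qed
  moreover have "\<alpha> t = x0 + (LINT r:{t0..t}|lborel. \<alpha>' r)" "\<alpha> s = x0 + (LINT r:{t0..s}|lborel. \<alpha>' r)"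
    using adm assms unfolding admissible_def by auto
  ultimately show ?thesis by simp
qed

lemma admissible_inner_increment_le:
  fixes \<alpha> \<alpha>' :: "real \<Rightarrow> 'a::euclidean_space"
  assumes adm: "admissible t0 tf x0 xf \<alpha> \<alpha>'" and st: "t0 \<le> s" "s \<le> t" "t \<le> tf"
    and slope: "\<And>r. r \<in> {s<..t} \<Longrightarrow> w \<bullet> \<alpha>' r \<le> h r"
    and M: "(\<integral>\<^sup>+r\<in>{t0..tf}. ennreal ((h r)\<^sup>2) \<partial>lborel) \<le> ennreal M" "M \<ge> 0"
  shows "w \<bullet> (\<alpha> t - \<alpha> s) \<le> M + (tf - t0)"
proof -
  let ?A = "{s<..t}"
  have intA: "set_integrable lborel ?A \<alpha>'"
    using st by (auto intro: set_integrable_subset[OF admissible_set_integrable[OF adm]])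
  then have "integrable lborel (\<lambda>r. w \<bullet> (indicator ?A r *\<^sub>R \<alpha>' r))"
    unfolding set_integrable_def by (rule integrable_inner_right)
  then have int: "integrable lborel (\<lambda>r. indicator ?A r *\<^sub>R (w \<bullet> \<alpha>' r))"
    by simp
  have "(\<integral>\<^sup>+r. ennreal (indicator ?A r *\<^sub>R (w \<bullet> \<alpha>' r)) \<partial>lborel)
      = (\<integral>\<^sup>+r\<in>?A. ennreal (w \<bullet> \<alpha>' r) \<partial>lborel)"
    by (intro nn_integral_cong) (simp split: split_indicator)
  also have "\<dots> \<le> ennreal 1 * (\<integral>\<^sup>+r\<in>?A. ennreal ((h r)\<^sup>2) \<partial>lborel) + ennreal 1 * emeasure lborel ?A"
  proof (rule nn_set_integral_le_affine)
    show "set_borel_measurable lborel ?A (\<lambda>r. w \<bullet> \<alpha>' r)"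
      using int by (simp add: set_borel_measurable_def)
    show "w \<bullet> \<alpha>' r \<le> 1 * (h r)\<^sup>2 + 1" if "r \<in> ?A" for r
      using slope[OF that] le_power2_plus_1[of "h r"] by simp
  qed simp_all
  also have "\<dots> \<le> ennreal M + ennreal (tf - t0)"
  proof (intro add_mono)
    show "ennreal 1 * (\<integral>\<^sup>+r\<in>?A. ennreal ((h r)\<^sup>2) \<partial>lborel) \<le> ennreal M"
    proof -
      have "(\<integral>\<^sup>+r\<in>?A. ennreal ((h r)\<^sup>2) \<partial>lborel) \<le> (\<integral>\<^sup>+r\<in>{t0..tf}. ennreal ((h r)\<^sup>2) \<partial>lborel)"
        by (rule nn_set_integral_set_mono) (use st in auto)
      then show ?thesis using M(1) by simp
    qed
    show "ennreal 1 * emeasure lborel ?A \<le> ennreal (tf - t0)"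
      using st by (simp add: ennreal_leI)
  qed
  also have "\<dots> = ennreal (M + (tf - t0))"
    using st M(2) by (simp add: ennreal_plus)
  finally have nn: "(\<integral>\<^sup>+r. ennreal (indicator ?A r *\<^sub>R (w \<bullet> \<alpha>' r)) \<partial>lborel) \<le> ennreal (M + (tf - t0))" .
  have "w \<bullet> (\<alpha> t - \<alpha> s) = w \<bullet> (\<integral>r. indicator ?A r *\<^sub>R \<alpha>' r \<partial>lborel)"
    using admissible_increment[OF adm st] by (simp add: set_lebesgue_integral_def)
  also have "\<dots> = (\<integral>r. indicator ?A r *\<^sub>R (w \<bullet> \<alpha>' r) \<partial>lborel)"
    using intA by (simp add: set_integrable_def flip: integral_inner_right)
  also have "\<dots> \<le> enn2real (\<integral>\<^sup>+r. ennreal (indicator ?A r *\<^sub>R (w \<bullet> \<alpha>' r)) \<partial>lborel)"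
    by (subst real_lebesgue_integral_def[OF int]) simp
  also have "\<dots> \<le> M + (tf - t0)"
    by (rule enn2real_leI[OF _ nn]) (use st M(2) in simp)
  finally show ?thesis .
qed

definition cone_around :: "real \<Rightarrow> 'a::real_normed_vector \<Rightarrow> 'a set" where
  "cone_around a w = {v. norm (norm v *\<^sub>R w - v) \<le> a * norm v}"

definition inward_on_cones :: "real \<Rightarrow> real \<Rightarrow> ('a::real_inner \<Rightarrow> 'a) \<Rightarrow> bool" where
  "inward_on_cones a R F \<longleftrightarrow>
     (\<forall>v w. norm w = 1 \<longrightarrow> R \<le> norm v \<longrightarrow> v \<in> cone_around a w \<longrightarrow> F v \<bullet> w \<le> 0)"

lemma in_cone_around_if_inner_ge:
  fixes v w :: "'a::real_inner"
  assumes w: "norm w = 1" and vB: "norm v \<le> B" and vw: "(1 - \<delta>) * B \<le> w \<bullet> v"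
    and \<delta>: "0 \<le> \<delta>" "\<delta> \<le> 1" "2 * \<delta> \<le> a\<^sup>2" and a: "0 \<le> a"
  shows "v \<in> cone_around a w"
proof -
  define n where "n = norm v"
  have n: "0 \<le> n" by (simp add: n_def)
  have ww: "w \<bullet> w = 1" and vv: "v \<bullet> v = n\<^sup>2"
    using w by (simp_all add: n_def flip: power2_norm_eq_inner)
  have "(norm (n *\<^sub>R w - v))\<^sup>2 = 2 * n\<^sup>2 - 2 * n * (w \<bullet> v)"
    unfolding power2_norm_eq_inner
    by (simp add: inner_diff_left inner_diff_right inner_commute ww vv algebra_simps power2_eq_square)
  also have "\<dots> \<le> 2 * n\<^sup>2 - 2 * n * ((1 - \<delta>) * n)"
  proof -
    have "(1 - \<delta>) * n \<le> (1 - \<delta>) * B" using vB \<delta> by (simp add: n_def mult_left_mono)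
    then show ?thesis using vw n by (simp add: mult_left_mono)
  qed
  also have "\<dots> = 2 * \<delta> * n\<^sup>2" by (simp add: algebra_simps power2_eq_square)
  also have "\<dots> \<le> (a * n)\<^sup>2"
    using \<delta> by (simp add: power_mult_distrib mult_right_mono)
  finally have "norm (n *\<^sub>R w - v) \<le> a * n"
    by (rule power2_le_imp_le) (use a n in simp)
  then show ?thesis by (simp add: cone_around_def n_def)
qed

lemma admissible_radial_progress_le:
  fixes \<alpha> \<alpha>' :: "real \<Rightarrow> 'a::euclidean_space" and F :: "'a \<Rightarrow> 'a"
  assumes inward: "inward_on_cones a R F" and a: "0 \<le> a"
    and adm: "admissible t0 tf x0 xf \<alpha> \<alpha>'"
    and rate: "(\<integral>\<^sup>+t\<in>{t0..tf}. ennreal ((norm (\<alpha>' t - F (\<alpha> t)))\<^sup>2) \<partial>lborel) \<le> ennreal M"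
    and M: "M \<ge> 0" and T: "T \<in> {t0..tf}" and max: "\<And>r. r \<in> {t0..T} \<Longrightarrow> norm (\<alpha> r) \<le> norm (\<alpha> T)"
    and \<delta>: "0 < \<delta>" "\<delta> \<le> 1" "2 * \<delta> \<le> a\<^sup>2"
    and large: "norm x0 \<le> (1 - \<delta>) * norm (\<alpha> T)" "R \<le> (1 - \<delta>) * norm (\<alpha> T)"
  shows "\<delta> * norm (\<alpha> T) \<le> M + (tf - t0)"
proof (cases "\<alpha> T = 0")
  case False
  define w where "w = \<alpha> T /\<^sub>R norm (\<alpha> T)"
  have w: "norm w = 1" "w \<bullet> \<alpha> T = norm (\<alpha> T)"
    using False by (simp_all add: w_def dot_square_norm power2_eq_square)
  have CS: "w \<bullet> x \<le> norm x" for x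
    using norm_cauchy_schwarz[of w x] w by simp
  have "w \<bullet> \<alpha> t0 \<le> (1 - \<delta>) * norm (\<alpha> T)"
    using CS[of x0] admissible_start[OF adm] large T by auto
  moreover have "continuous_on {t0..T} (\<lambda>r. w \<bullet> \<alpha> r)"
    using T by (intro continuous_on_inner continuous_on_const
        continuous_on_subset[OF admissible_continuous_on[OF adm]]) auto
  ultimately obtain s where s: "s \<in> {t0..T}" "w \<bullet> \<alpha> s \<le> (1 - \<delta>) * norm (\<alpha> T)"
    and after: "\<And>r. r \<in> {s<..T} \<Longrightarrow> (1 - \<delta>) * norm (\<alpha> T) < w \<bullet> \<alpha> r"
    using T by (elim last_time_le) auto
  have "w \<bullet> \<alpha>' r \<le> norm (\<alpha>' r - F (\<alpha> r))" if r: "r \<in> {s<..T}" for r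
  proof -
    have "\<alpha> r \<in> cone_around a w"
      using max[of r] after[OF r] r s w \<delta> a by (intro in_cone_around_if_inner_ge) auto
    moreover have "R \<le> norm (\<alpha> r)"
      using large after[OF r] CS[of "\<alpha> r"] by linarith
    ultimately have "F (\<alpha> r) \<bullet> w \<le> 0"
      using inward w by (simp add: inward_on_cones_def)
    then have "w \<bullet> \<alpha>' r \<le> w \<bullet> (\<alpha>' r - F (\<alpha> r))"
      by (simp add: inner_diff_right inner_commute)
    then show ?thesis using CS by (meson order_trans)
  qed
  then have "w \<bullet> (\<alpha> T - \<alpha> s) \<le> M + (tf - t0)"
    using s T by (intro admissible_inner_increment_le[OF adm _ _ _ _ rate M]) auto
  then show ?thesis
    using w s by (simp add: inner_diff_right algebra_simps)
qed (use M T in simp)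

lemma admissible_norm_bound_if_inward:
  fixes \<alpha> \<alpha>' :: "real \<Rightarrow> 'a::euclidean_space" and F :: "'a \<Rightarrow> 'a"
  assumes inward: "inward_on_cones a R F" and a: "a > 0" and R: "R \<ge> 0"
    and adm: "admissible t0 tf x0 xf \<alpha> \<alpha>'"
    and rate: "(\<integral>\<^sup>+t\<in>{t0..tf}. ennreal ((norm (\<alpha>' t - F (\<alpha> t)))\<^sup>2) \<partial>lborel) \<le> ennreal M"
    and M: "M \<ge> 0" and t: "t \<in> {t0..tf}"
  shows "norm (\<alpha> t) < 2 * (norm x0 + R + (M + (tf - t0)) / min (a\<^sup>2/2) (1/2) + 1)"
proof (rule ccontr)
  define \<delta> where "\<delta> = min (a\<^sup>2/2) (1/2::real)"
  define D where "D = M + (tf - t0)"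
  define B where "B = 2 * (norm x0 + R + D / \<delta> + 1)"
  have \<delta>: "0 < \<delta>" "\<delta> \<le> 1/2" "2 * \<delta> \<le> a\<^sup>2" using a by (auto simp: \<delta>_def)
  have D: "D \<ge> 0" using M t by (simp add: D_def)
  have "0 \<le> D / \<delta>" using D \<delta> by simp
  then have B_half: "norm x0 < B/2" "R \<le> B/2" using R by (simp_all add: B_def)
  then have B0: "0 < B" using norm_ge_zero[of x0] by linarith
  have "\<delta> * B \<le> (1/2) * B" using \<delta> B0 by (intro mult_right_mono) auto
  then have B_fraction: "B/2 \<le> (1 - \<delta>) * B" by (simp add: algebra_simps)
  have "\<delta> * B = 2 * \<delta> * (norm x0 + R + 1) + 2 * D" using \<delta> by (simp add: B_def field_simps)
  moreover have "0 < 2 * \<delta> * (norm x0 + R + 1)" using \<delta> R by (simp add: add_nonneg_pos)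
  ultimately have D_less: "D < \<delta> * B" using D by linarith
  assume "\<not> ?thesis"
  then have "B \<le> norm (\<alpha> t)" by (simp add: B_def D_def \<delta>_def)
  then obtain T where T: "T \<in> {t0..t}" "B \<le> norm (\<alpha> T)"
    and before: "\<And>r. r \<in> {t0..<T} \<Longrightarrow> norm (\<alpha> r) < B"
    using first_time_ge[OF continuous_on_norm[OF admissible_continuous_on[OF adm]] t] by blast
  have "(1 - \<delta>) * B \<le> (1 - \<delta>) * norm (\<alpha> T)" using T \<delta> by (simp add: mult_left_mono)
  then have large: "norm x0 \<le> (1 - \<delta>) * norm (\<alpha> T)" "R \<le> (1 - \<delta>) * norm (\<alpha> T)"
    using B_half B_fraction by linarith+
  have max: "norm (\<alpha> r) \<le> norm (\<alpha> T)" if "r \<in> {t0..T}" for r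
    using before[of r] that T by (cases "r = T") fastforce+
  have "\<delta> * norm (\<alpha> T) \<le> D"
    unfolding D_def using T t \<delta> a
    by (intro admissible_radial_progress_le[OF inward _ adm rate M _ max _ _ _ large]) auto
  moreover have "\<delta> * B \<le> \<delta> * norm (\<alpha> T)" using T \<delta> by (simp add: mult_left_mono)
  ultimately show False using D_less by linarith
qed

lemma H1_norm_sq_le:
  fixes \<alpha> \<alpha>' :: "real \<Rightarrow> 'a::euclidean_space" and F :: "'a \<Rightarrow> 'a"
  assumes adm: "admissible t0 tf x0 xf \<alpha> \<alpha>'" and t: "t0 \<le> tf"
    and rate: "(\<integral>\<^sup>+t\<in>{t0..tf}. ennreal ((norm (\<alpha>' t - F (\<alpha> t)))\<^sup>2) \<partial>lborel) \<le> ennreal M"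
    and M: "0 \<le> M"
    and \<alpha>: "\<And>t. t \<in> {t0..tf} \<Longrightarrow> norm (\<alpha> t) \<le> B"
    and F: "\<And>t. t \<in> {t0..tf} \<Longrightarrow> norm (F (\<alpha> t)) \<le> K"
  shows "H1_norm_sq t0 tf \<alpha> \<alpha>' \<le> ennreal (2 * M + (B\<^sup>2 + 2 * K\<^sup>2) * (tf - t0))"
proof -
  let ?I = "{t0..tf}" and ?C = "B\<^sup>2 + 2 * K\<^sup>2"
  have "(\<lambda>t. indicator ?I t *\<^sub>R \<alpha> t) \<in> borel_measurable borel"
    by (rule borel_measurable_continuous_on_indicator[OF _ admissible_continuous_on[OF adm]]) simp
  moreover have "(\<lambda>t. indicator ?I t *\<^sub>R \<alpha>' t) \<in> borel_measurable lborel"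
    using adm by (simp add: admissible_def set_borel_measurable_def)
  ultimately have "(\<lambda>t. (norm (indicator ?I t *\<^sub>R \<alpha> t))\<^sup>2 + (norm (indicator ?I t *\<^sub>R \<alpha>' t))\<^sup>2)
      \<in> borel_measurable lborel"
    by measurable
  moreover have "(\<lambda>t. (norm (indicator ?I t *\<^sub>R \<alpha> t))\<^sup>2 + (norm (indicator ?I t *\<^sub>R \<alpha>' t))\<^sup>2)
      = (\<lambda>t. indicator ?I t *\<^sub>R ((norm (\<alpha> t))\<^sup>2 + (norm (\<alpha>' t))\<^sup>2))"
    by (auto simp: indicator_def)
  ultimately have meas: "set_borel_measurable lborel ?I (\<lambda>t. (norm (\<alpha> t))\<^sup>2 + (norm (\<alpha>' t))\<^sup>2)"
    by (simp add: set_borel_measurable_def)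
  have pt: "(norm (\<alpha> t))\<^sup>2 + (norm (\<alpha>' t))\<^sup>2 \<le> 2 * (norm (\<alpha>' t - F (\<alpha> t)))\<^sup>2 + ?C"
    if "t \<in> ?I" for t
  proof -
    define g where "g = norm (\<alpha>' t - F (\<alpha> t))"
    have "norm (\<alpha>' t) \<le> g + K"
      using norm_triangle_ineq[of "\<alpha>' t - F (\<alpha> t)" "F (\<alpha> t)"] F[OF that] by (simp add: g_def)
    then have "(norm (\<alpha>' t))\<^sup>2 \<le> (g + K)\<^sup>2"
      by (simp add: power_mono)
    also have "\<dots> \<le> 2 * g\<^sup>2 + 2 * K\<^sup>2"
      using zero_le_power2[of "g - K"] unfolding power2_sum power2_diff by linarith
    moreover have "(norm (\<alpha> t))\<^sup>2 \<le> B\<^sup>2"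
      using \<alpha>[OF that] by (simp add: power_mono)
    ultimately show ?thesis
      by (simp add: g_def)
  qed
  have "H1_norm_sq t0 tf \<alpha> \<alpha>'
      \<le> ennreal 2 * (\<integral>\<^sup>+t\<in>?I. ennreal ((norm (\<alpha>' t - F (\<alpha> t)))\<^sup>2) \<partial>lborel) + ennreal ?C * emeasure lborel ?I"
    unfolding H1_norm_sq_def by (rule nn_set_integral_le_affine[OF meas _ pt]) auto
  also have "\<dots> \<le> ennreal 2 * ennreal M + ennreal ?C * ennreal (tf - t0)"
    using rate t by (intro add_mono mult_left_mono) auto
  also have "\<dots> = ennreal (2 * M + ?C * (tf - t0))"
    using M t by (simp add: ennreal_plus ennreal_mult)
  finally show ?thesis .
qed

lemma norm_integral_le_bound:
  fixes f :: "'b::euclidean_space \<Rightarrow> 'c::euclidean_space"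
  assumes "\<And>x. x \<in> cbox a b \<Longrightarrow> norm (f x) \<le> K" and "0 \<le> K"
  shows "norm (integral (cbox a b) f) \<le> K * measure lborel (cbox a b)"
proof (cases "f integrable_on cbox a b")
  case True
  then show ?thesis using assms by (intro has_integral_bound[of K f]) auto
qed (use assms in \<open>simp add: not_integrable_integral\<close>)

lemma integral_inner_nonpos:
  fixes f :: "'b::euclidean_space \<Rightarrow> 'c::euclidean_space"
  assumes "\<And>x. x \<in> S \<Longrightarrow> f x \<bullet> w \<le> 0"
  shows "integral S f \<bullet> w \<le> 0"
proof (cases "f integrable_on S")
  case True
  then have "integral S f \<bullet> w = integral S (\<lambda>x. f x \<bullet> w)"
    by (simp add: integral_linear[OF _ bounded_linear_inner_left] o_def)
  also have "\<dots> \<le> integral S (\<lambda>x. 0::real)"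
    using True assms
    by (intro integral_le integrable_0 integrable_linear[OF _ bounded_linear_inner_left, unfolded o_def]) auto
  finally show ?thesis by simp
qed (simp add: not_integrable_integral)

lemma bounded_Feps_image_cball:
  fixes Fm Fp :: "'a::euclidean_space \<Rightarrow> 'a" and e :: 'a
  assumes e: "e \<in> Basis" and Fm: "continuous_on UNIV Fm" and Fp: "continuous_on UNIV Fp"
    and \<zeta>: "continuous_on UNIV \<zeta>" and \<epsilon>: "\<epsilon> > 0"
  shows "bounded (Feps \<zeta> e Fm Fp \<epsilon> ` cball 0 B)"
proof -
  have "bounded (Fm ` cball 0 (B + \<epsilon>))" "bounded (Fp ` cball 0 (B + \<epsilon>))" "bounded (\<zeta> ` {-1..1})"
    by (intro compact_imp_bounded compact_continuous_image continuous_on_subset[OF Fm]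
        continuous_on_subset[OF Fp] continuous_on_subset[OF \<zeta>]; simp)+
  then obtain C1 C2 Z where C1: "\<And>z. z \<in> cball 0 (B + \<epsilon>) \<Longrightarrow> norm (Fm z) \<le> C1"
    and C2: "\<And>z. z \<in> cball 0 (B + \<epsilon>) \<Longrightarrow> norm (Fp z) \<le> C2"
    and Z: "\<And>x. x \<in> {-1..1} \<Longrightarrow> \<bar>\<zeta> x\<bar> \<le> Z"
    unfolding bounded_iff real_norm_def by fast
  define K where "K = max 0 Z / \<epsilon> * (max 0 C1 + max 0 C2)"
  have K: "0 \<le> K" using \<epsilon> by (simp add: K_def)
  have "norm (Feps \<zeta> e Fm Fp \<epsilon> v) \<le> K * (2 * \<epsilon>)" if v: "norm v \<le> B" for v
  proof -
    define f where "f u = (\<zeta> (u / \<epsilon>) / \<epsilon>) *\<^sub>R ((if u \<ge> v \<bullet> e then Fm (v - u *\<^sub>R e) else 0) +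
      (if u \<le> v \<bullet> e then Fp (v - u *\<^sub>R e) else 0))" for u
    have "norm (f u) \<le> K" if u: "u \<in> cbox (-\<epsilon>) \<epsilon>" for u
    proof -
      have "norm (v - u *\<^sub>R e) \<le> B + \<epsilon>"
        using norm_triangle_ineq4[of v "u *\<^sub>R e"] e u v by auto
      then have "norm ((if u \<ge> v \<bullet> e then Fm (v - u *\<^sub>R e) else 0) +
                 (if u \<le> v \<bullet> e then Fp (v - u *\<^sub>R e) else 0)) \<le> max 0 C1 + max 0 C2"
        using C1[of "v - u *\<^sub>R e"] C2[of "v - u *\<^sub>R e"]
        by (intro order_trans[OF norm_triangle_ineq] add_mono) auto
      moreover have "\<bar>\<zeta> (u / \<epsilon>) / \<epsilon>\<bar> \<le> max 0 Z / \<epsilon>"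
        using Z[of "u / \<epsilon>"] u \<epsilon> by (auto simp: divide_right_mono field_simps)
      ultimately show ?thesis
        unfolding K_def f_def norm_scaleR using \<epsilon> by (intro mult_mono) auto
    qed
    then have "norm (integral (cbox (-\<epsilon>) \<epsilon>) f) \<le> K * measure lborel (cbox (-\<epsilon>) \<epsilon>)"
      by (rule norm_integral_le_bound[OF _ K])
    moreover have "Feps \<zeta> e Fm Fp \<epsilon> v = integral {-\<epsilon>..\<epsilon>} f"
      unfolding Feps_def f_def[abs_def] by (rule refl)
    ultimately show ?thesis
      using \<epsilon> by simp
  qed
  then show ?thesis
    unfolding bounded_iff by (intro exI[of _ "K * (2 * \<epsilon>)"]) auto
qed

text \<open>
  \<open>w\<close> is close to the direction of \<open>v\<close>, hence (for large \<open>v\<close>) to that of the nearby point \<open>z\<close>,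
  along which \<open>H\<close> has a negative component of size \<open>c |H|\<close>.
\<close>

lemma inner_nonpos_if_inward_nearby:
  fixes H z v w :: "'a::real_inner"
  assumes Hz: "H \<bullet> z \<le> - c * norm z * norm H" and w: "norm w = 1"
    and cone: "v \<in> cone_around (c/2) w"
    and vz: "norm (v - z) \<le> \<epsilon>" and c: "c > 0" and \<epsilon>: "\<epsilon> \<ge> 0"
    and v: "4 * \<epsilon> / c + 2 * \<epsilon> \<le> norm v" and z: "norm z > 0"
  shows "H \<bullet> w \<le> 0"
proof -
  have split: "norm z *\<^sub>R w - z = (norm z - norm v) *\<^sub>R w + (norm v *\<^sub>R w - v) + (v - z)"
    by (simp add: algebra_simps)
  have "norm (norm z *\<^sub>R w - z)
      \<le> norm ((norm z - norm v) *\<^sub>R w) + norm (norm v *\<^sub>R w - v) + norm (v - z)"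
    unfolding split
    using norm_triangle_ineq[of "(norm z - norm v) *\<^sub>R w + (norm v *\<^sub>R w - v)" "v - z"]
      norm_triangle_ineq[of "(norm z - norm v) *\<^sub>R w" "norm v *\<^sub>R w - v"] by linarith
  also have "norm ((norm z - norm v) *\<^sub>R w) = \<bar>norm z - norm v\<bar>"
    using w by simp
  finally have "norm (norm z *\<^sub>R w - z) \<le> \<bar>norm z - norm v\<bar> + norm (norm v *\<^sub>R w - v) + norm (v - z)" .
  moreover have "\<bar>norm z - norm v\<bar> \<le> \<epsilon>"
    using vz norm_triangle_ineq3[of v z] norm_triangle_ineq3[of z v] norm_minus_commute[of v z] by linarith
  ultimately have wz: "norm (norm z *\<^sub>R w - z) \<le> 2 * \<epsilon> + c/2 * norm v"
    using cone vz by (simp add: cone_around_def)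
  have zv: "norm v - \<epsilon> \<le> norm z"
    using vz norm_triangle_ineq3[of v z] by linarith
  have "c * (4 * \<epsilon> / c + 2 * \<epsilon>) \<le> c * norm v"
    using v c by (simp add: mult_left_mono)
  moreover have "c * (4 * \<epsilon> / c + 2 * \<epsilon>) = 4 * \<epsilon> + 2 * c * \<epsilon>"
    using c by (simp add: field_simps)
  ultimately have cv: "4 * \<epsilon> + 2 * c * \<epsilon> \<le> c * norm v" by simp
  have "norm z * (H \<bullet> w) = H \<bullet> (norm z *\<^sub>R w - z) + H \<bullet> z"
    by (simp add: inner_diff_right)
  also have "\<dots> \<le> norm H * (2 * \<epsilon> + c/2 * norm v) - c * norm z * norm H"
    using Hz norm_cauchy_schwarz[of H "norm z *\<^sub>R w - z"] mult_left_mono[OF wz, of "norm H"] by simp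
  also have "\<dots> \<le> norm H * (2 * \<epsilon> + c/2 * norm v) - c * (norm v - \<epsilon>) * norm H"
    using zv c by (simp add: mult_right_mono)
  also have "\<dots> = norm H * (2 * \<epsilon> + c * \<epsilon> - c/2 * norm v)"
    by (simp add: algebra_simps)
  also have "\<dots> \<le> 0"
    using cv by (intro mult_nonneg_nonpos) auto
  finally show ?thesis
    using z by (simp add: mult_le_0_iff)
qed

lemma inward_on_cones_Feps:
  fixes Fm Fp :: "'a::euclidean_space \<Rightarrow> 'a" and e :: 'a
  assumes e: "e \<in> Basis" and \<zeta>: "\<forall>x. \<zeta> x \<ge> 0" and \<epsilon>: "\<epsilon> > 0" and c: "c > 0" and R: "R \<ge> 0"
    and inward: "\<forall>v. norm v > R \<longrightarrow>
         (v \<bullet> e \<le> 0 \<longrightarrow> Fm v \<bullet> (v /\<^sub>R norm v) < - c * norm (Fm v)) \<and>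
         (v \<bullet> e \<ge> 0 \<longrightarrow> Fp v \<bullet> (v /\<^sub>R norm v) < - c * norm (Fp v))"
  shows "inward_on_cones (c/2) (R + 4 * \<epsilon> / c + 3 * \<epsilon> + 1) (Feps \<zeta> e Fm Fp \<epsilon>)"
  unfolding inward_on_cones_def
proof (intro allI impI)
  fix v w :: 'a
  assume w: "norm w = 1" and v: "R + 4 * \<epsilon> / c + 3 * \<epsilon> + 1 \<le> norm v" and cone: "v \<in> cone_around (c/2) w"
  have "0 \<le> 4 * \<epsilon> / c" using \<epsilon> c by simp
  have "((\<zeta> (u / \<epsilon>) / \<epsilon>) *\<^sub>R ((if u \<ge> v \<bullet> e then Fm (v - u *\<^sub>R e) else 0) +
          (if u \<le> v \<bullet> e then Fp (v - u *\<^sub>R e) else 0))) \<bullet> w \<le> 0"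
    if u: "u \<in> {-\<epsilon>..\<epsilon>}" for u
  proof -
    define z where "z = v - u *\<^sub>R e"
    have vz: "norm (v - z) \<le> \<epsilon>" using u e by (auto simp: z_def)
    then have zR: "norm z > R"
      using norm_triangle_ineq3[of v z] v \<open>0 \<le> 4 * \<epsilon> / c\<close> \<epsilon> by linarith
    have ze: "z \<bullet> e = v \<bullet> e - u" using e by (simp add: z_def inner_diff_left)
    have H: "H \<bullet> w \<le> 0" if "H \<bullet> (z /\<^sub>R norm z) < - c * norm H" for H
    proof (rule inner_nonpos_if_inward_nearby[OF _ w cone vz c])
      have "(H \<bullet> z) / norm z < - c * norm H"
        using that by (simp add: divide_inverse_commute)
      moreover have "0 < norm z" using zR R by linarith
      ultimately have "H \<bullet> z < (- c * norm H) * norm z"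
        by (simp only: pos_divide_less_eq)
      then show "H \<bullet> z \<le> - c * norm z * norm H" by (simp add: algebra_simps)
    qed (use v \<epsilon> zR R \<open>0 \<le> 4 * \<epsilon> / c\<close> in auto)
    have "(if u \<ge> v \<bullet> e then Fm z \<bullet> w else 0) + (if u \<le> v \<bullet> e then Fp z \<bullet> w else 0) \<le> 0"
      using H inward zR ze by (auto intro: add_nonpos_nonpos)
    then have "(\<zeta> (u / \<epsilon>) / \<epsilon>) *
        ((if u \<ge> v \<bullet> e then Fm z \<bullet> w else 0) + (if u \<le> v \<bullet> e then Fp z \<bullet> w else 0)) \<le> 0"
      using \<zeta> \<epsilon> by (intro mult_nonneg_nonpos) auto
    moreover have "\<And>P x. (if P then x else 0) \<bullet> w = (if P then x \<bullet> w else 0)"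
      by simp
    ultimately show ?thesis
      unfolding inner_scaleR_left inner_add_left z_def[symmetric] by presburger
  qed
  then show "Feps \<zeta> e Fm Fp \<epsilon> v \<bullet> w \<le> 0"
    unfolding Feps_def by (rule integral_inner_nonpos)
qed

lemma H1_norm_sq_uniform_bound_if_inward:
  fixes F :: "'a::euclidean_space \<Rightarrow> 'a" and x0 :: 'a
  assumes inward: "inward_on_cones a R F" and a: "a > 0" and R: "R \<ge> 0"
    and F: "\<And>B. bounded (F ` cball 0 B)" and t: "t0 \<le> tf" and M: "M \<ge> 0"
  obtains V where "0 \<le> V"
    "\<And>\<alpha> \<alpha>'. admissible t0 tf x0 xf \<alpha> \<alpha>' \<Longrightarrow>
      (\<integral>\<^sup>+t\<in>{t0..tf}. ennreal ((norm (\<alpha>' t - F (\<alpha> t)))\<^sup>2) \<partial>lborel) \<le> ennreal M \<Longrightarrow>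
      H1_norm_sq t0 tf \<alpha> \<alpha>' \<le> ennreal V"
proof -
  define B where "B = 2 * (norm x0 + R + (M + (tf - t0)) / min (a\<^sup>2/2) (1/2) + 1)"
  obtain K where K: "\<And>v. v \<in> cball 0 B \<Longrightarrow> norm (F v) \<le> K"
    using F[of B] unfolding bounded_iff by blast
  show ?thesis
  proof (rule that[of "2 * M + (B\<^sup>2 + 2 * K\<^sup>2) * (tf - t0)"])
    show "0 \<le> 2 * M + (B\<^sup>2 + 2 * K\<^sup>2) * (tf - t0)" using M t by simp
    fix \<alpha> \<alpha>' :: "real \<Rightarrow> 'a"
    assume adm: "admissible t0 tf x0 xf \<alpha> \<alpha>'"
      and rate: "(\<integral>\<^sup>+t\<in>{t0..tf}. ennreal ((norm (\<alpha>' t - F (\<alpha> t)))\<^sup>2) \<partial>lborel) \<le> ennreal M"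
    have "norm (\<alpha> t) \<le> B" if "t \<in> {t0..tf}" for t
      unfolding B_def by (rule less_imp_le admissible_norm_bound_if_inward[OF inward a R adm rate M that])+
    then show "H1_norm_sq t0 tf \<alpha> \<alpha>' \<le> ennreal (2 * M + (B\<^sup>2 + 2 * K\<^sup>2) * (tf - t0))"
      using K by (intro H1_norm_sq_le[OF adm t rate M]) auto
  qed
qed

lemma smooth_imp_continuous_on: "smooth f \<Longrightarrow> continuous_on UNIV f"
  unfolding smooth_def by (metis Ck.simps(1))

theorem mainTheorem3:
  fixes Fm Fp :: "'a::euclidean_space \<Rightarrow> 'a" and e :: 'a
    and \<zeta> :: "real \<Rightarrow> real" and t0 tf :: real and x0 xf :: 'a
  assumes "e \<in> Basis"
    and "smooth Fm" and "smooth Fp"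
    and "assumption_A1 e Fm Fp" and "assumption_A2 e Fm Fp"
    and "mollifier \<zeta>"
    and "t0 < tf"
  shows "\<exists>\<epsilon>s>0. \<forall>\<epsilon>. 0 < \<epsilon> \<and> \<epsilon> < \<epsilon>s \<longrightarrow>
           (\<forall>(\<alpha> :: nat \<Rightarrow> real \<Rightarrow> 'a) \<alpha>' M1. M1 > 0 \<and>
              (\<forall>m. admissible t0 tf x0 xf (\<alpha> m) (\<alpha>' m)) \<and>
              (\<forall>m. rate \<zeta> e Fm Fp \<epsilon> t0 tf (\<alpha> m) (\<alpha>' m) < ennreal M1) \<longrightarrow>
              (\<exists>M2>0. \<forall>m. H1_norm_sq t0 tf (\<alpha> m) (\<alpha>' m) < ennreal (M2\<^sup>2)))"
proof -
  obtain R c where R: "R > 0" and c: "c > 0" and inward: "\<forall>v. norm v > R \<longrightarrow>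
         (v \<bullet> e \<le> 0 \<longrightarrow> Fm v \<bullet> (v /\<^sub>R norm v) < - c * norm (Fm v)) \<and>
         (v \<bullet> e \<ge> 0 \<longrightarrow> Fp v \<bullet> (v /\<^sub>R norm v) < - c * norm (Fp v))"
    using assms(5) unfolding assumption_A2_def by blast
  have \<zeta>: "\<forall>x. \<zeta> x \<ge> 0" "smooth \<zeta>"
    using assms(6) by (auto simp: mollifier_def)
  show ?thesis
  proof (rule exI[of _ 1], intro conjI allI impI)
    fix \<epsilon> :: real and \<alpha> \<alpha>' :: "nat \<Rightarrow> real \<Rightarrow> 'a" and M1 :: real
    assume "0 < \<epsilon> \<and> \<epsilon> < 1"
      and H: "M1 > 0 \<and> (\<forall>m. admissible t0 tf x0 xf (\<alpha> m) (\<alpha>' m)) \<and>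
              (\<forall>m. rate \<zeta> e Fm Fp \<epsilon> t0 tf (\<alpha> m) (\<alpha>' m) < ennreal M1)"
    then have \<epsilon>: "\<epsilon> > 0" and M1: "M1 > 0" by auto
    have inward_Feps: "inward_on_cones (c/2) (R + 4 * \<epsilon> / c + 3 * \<epsilon> + 1) (Feps \<zeta> e Fm Fp \<epsilon>)"
      using assms(1) \<zeta>(1) \<epsilon> c R inward by (intro inward_on_cones_Feps) auto
    have bounded_Feps: "bounded (Feps \<zeta> e Fm Fp \<epsilon> ` cball 0 B)" for B
      using assms(1-3) \<zeta>(2) \<epsilon> by (intro bounded_Feps_image_cball smooth_imp_continuous_on)
    have "0 < c/2" "0 \<le> R + 4 * \<epsilon> / c + 3 * \<epsilon> + 1" using R c \<epsilon> by auto
    then obtain V where V: "0 \<le> V" and H1_le: "\<And>\<alpha> \<alpha>'. admissible t0 tf x0 xf \<alpha> \<alpha>' \<Longrightarrow>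
        (\<integral>\<^sup>+t\<in>{t0..tf}. ennreal ((norm (\<alpha>' t - Feps \<zeta> e Fm Fp \<epsilon> (\<alpha> t)))\<^sup>2) \<partial>lborel) \<le> ennreal M1 \<Longrightarrow>
        H1_norm_sq t0 tf \<alpha> \<alpha>' \<le> ennreal V"
      using H1_norm_sq_uniform_bound_if_inward[OF inward_Feps _ _ bounded_Feps
          less_imp_le[OF assms(7)] less_imp_le[OF M1], of x0 xf] by blast
    have "H1_norm_sq t0 tf (\<alpha> m) (\<alpha>' m) \<le> ennreal V" for m
      using H by (intro H1_le) (auto simp: rate_def less_imp_le)
    moreover have "ennreal V < ennreal ((sqrt (V + 1))\<^sup>2)"
      using V by (simp add: ennreal_less_iff)
    ultimately have "H1_norm_sq t0 tf (\<alpha> m) (\<alpha>' m) < ennreal ((sqrt (V + 1))\<^sup>2)" for m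
      by (rule le_less_trans)
    then show "\<exists>M2>0. \<forall>m. H1_norm_sq t0 tf (\<alpha> m) (\<alpha>' m) < ennreal (M2\<^sup>2)"
      using V by (intro exI[of _ "sqrt (V + 1)"] conjI allI) auto
  qed simp
qed

end
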